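(* Let $\mathbb{S}^2=\{\boldsymbol{x}\in\mathbb{R}^3:\boldsymbol{x}^\top\boldsymbol{x}=1\}$ and let $\{b_n:n\in\mathbb{N}_0\}$ be a sequence of nonnegative functions $b_n:\mathbb{S}^2\to[0,\infty)$ such that $\sum_{n=0}^\infty b_n(\boldsymbol{x})<\infty$ for every $\boldsymbol{x}\in\mathbb{S}^2$. Define $$C(\boldsymbol{x}_1,\boldsymbol{x}_2)=\sum_{n=0}^\infty \{b_n(\boldsymbol{x}_1)b_n(\boldsymbol{x}_2)\}^{1/2}P_n(\boldsymbol{x}_1^\top\boldsymbol{x}_2),\qquad \boldsymbol{x}_1,\boldsymbol{x}_2\in\mathbb{S}^2.$$ Then $C$ is semi positive definite: for every $k\in\mathbb{N}$, all $\boldsymbol{x}_1,\dots,\boldsymbol{x}_k\in\mathbb{S}^2$ and all $a_1,\dots,a_k\in\mathbb{R}$, $$\sum_{i=1}^k\sum_{j=1}^k a_ia_jC(\boldsymbol{x}_i,\boldsymbol{x}_j)\ge 0.$$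
   Context: $P_n$ denotes the Legendre polynomial of degree $n$ (normalized so that $P_n(1)=1$). *)

theory Defs
  imports "HOL-Analysis.Analysis"
begin

text \<open>Legendre polynomials via Bonnet's recurrence, normalized so that P_n(1) = 1:
  P_0 = 1, P_1 = t, (n+2) P_(n+2) = (2n+3) t P_(n+1) - (n+1) P_n.\<close>
fun legendreP :: "nat \<Rightarrow> real \<Rightarrow> real" where
  "legendreP 0 t = 1"
| "legendreP (Suc 0) t = t"
| "legendreP (Suc (Suc n)) t =
     ((2 * real n + 3) * t * legendreP (Suc n) t - (real n + 1) * legendreP n t) / (real n + 2)"

definition sphere2 :: "(real^3) set" where
  "sphere2 = {x. x \<bullet> x = 1}"

definition covC :: "(nat \<Rightarrow> real^3 \<Rightarrow> real) \<Rightarrow> real^3 \<Rightarrow> real^3 \<Rightarrow> real" where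
  "covC b x1 x2 = (\<Sum>n. sqrt (b n x1 * b n x2) * legendreP n (x1 \<bullet> x2))"

end

theory Submission
  imports Defs "HOL-Computational_Algebra.Polynomial"
begin

text \<open>Each summand \<open>P\<^sub>n (x \<bullet> y)\<close> is a positive semidefinite kernel on the sphere, because
  it has a finite Gram representation. Lift \<open>x\<close> along the Hopf map to a unit spinor \<open>(a, b)\<close>
  and put \<open>q\<^sub>x = (a Z + b W) ^ n * (cnj a W - cnj b Z) ^ n\<close>. For the Fischer inner product
  \<open>\<langle>p, r\<rangle> = (\<Sum>j. j! (2n - j)! p\<^sub>j cnj r\<^sub>j)\<close> on binary forms of degree \<open>2n\<close>, polarisation
  gives \<open>\<langle>q\<^sub>x, q\<^sub>y\<rangle> = (n!)\<^sup>2 (\<Sum>k\<le>n. (n choose k)\<^sup>2 ((1 + t) / 2) ^ (n - k) ((t - 1) / 2) ^ k)\<close>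
  with \<open>t = x \<bullet> y\<close>, and the sum is \<open>P\<^sub>n t\<close>. Positive semidefiniteness also yields
  \<open>\<bar>P\<^sub>n (x \<bullet> y)\<bar> \<le> 1\<close>, so the series defining \<open>C\<close> converges by AM-GM; rescaling by
  \<open>sqrt (b\<^sub>n x) * sqrt (b\<^sub>n y)\<close> and summing preserve positive semidefiniteness.\<close>

section \<open>Binary forms and the Fischer pairing\<close>

lemma degree_linear_poly_power_le: "degree ([:v, u:] ^ n) \<le> n"
proof -
  have "degree ([:v, u:] ^ n) \<le> degree [:v, u:] * n" by (rule degree_power_le)
  also have "\<dots> \<le> n" by (simp add: degree_pCons_le)
  finally show ?thesis .
qed

lemma coeff_linear_poly_power_general:
  fixes u v :: "'a::comm_semiring_1"
  shows "coeff ([:v, u:] ^ N) j = of_nat (N choose j) * u ^ j * v ^ (N - j)"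
proof (cases "j \<le> N")
  case True
  thus ?thesis by (rule coeff_linear_poly_power)
next
  case False
  hence "degree ([:v, u:] ^ N) < j" using degree_linear_poly_power_le[of v u N] by linarith
  thus ?thesis using False by (simp add: coeff_eq_0 binomial_eq_0)
qed

text \<open>A polynomial \<open>p\<close> of degree \<open>\<le> N\<close> stands for the binary form
  \<open>\<Sum>j\<le>N. coeff p j * Z ^ j * W ^ (N - j)\<close>. The pairing is bilinear; the Fischer inner product
  is \<open>fischer_pairing N p (map_poly cnj r)\<close>.\<close>
definition fischer_pairing :: "nat \<Rightarrow> 'a::field_char_0 poly \<Rightarrow> 'a poly \<Rightarrow> 'a" where
  "fischer_pairing N p r = (\<Sum>j\<le>N. of_nat (fact j * fact (N - j)) * coeff p j * coeff r j)"

definition form_eval :: "nat \<Rightarrow> 'a::field_char_0 poly \<Rightarrow> 'a \<Rightarrow> 'a \<Rightarrow> 'a" where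
  "form_eval N p u v = (\<Sum>j\<le>N. coeff p j * u ^ j * v ^ (N - j))"

lemma fischer_pairing_linear_power:
  "fischer_pairing N p ([:v, u:] ^ N) = fact N * form_eval N p u v"
  unfolding fischer_pairing_def form_eval_def sum_distrib_left
proof (intro sum.cong refl)
  fix j assume "j \<in> {..N}"
  hence "of_nat (fact j * fact (N - j)) * of_nat (N choose j) = (fact N :: 'a)"
    using binomial_fact_lemma[of j N] by (metis atMost_iff of_nat_fact of_nat_mult)
  thus "of_nat (fact j * fact (N - j)) * coeff p j * coeff ([:v, u:] ^ N) j =
        fact N * (coeff p j * u ^ j * v ^ (N - j))"
    by (simp add: coeff_linear_poly_power_general mult_ac)
qed

lemma fischer_pairing_add_right:
  "fischer_pairing N p (r1 + r2) = fischer_pairing N p r1 + fischer_pairing N p r2"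
  by (simp add: fischer_pairing_def algebra_simps sum.distrib)

lemma fischer_pairing_smult_right: "fischer_pairing N p (smult c r) = c * fischer_pairing N p r"
  by (simp add: fischer_pairing_def sum_distrib_left mult_ac)

lemma fischer_pairing_zero_right: "fischer_pairing N p 0 = 0"
  by (simp add: fischer_pairing_def)

lemma fischer_pairing_sum_right:
  "fischer_pairing N p (sum f A) = (\<Sum>a\<in>A. fischer_pairing N p (f a))"
  by (induction A rule: infinite_finite_induct)
    (simp_all add: fischer_pairing_zero_right fischer_pairing_add_right)

lemma form_eval_eq_poly:
  assumes "degree p \<le> N" "v \<noteq> 0"
  shows "form_eval N p u v = v ^ N * poly p (u / v)"
proof -
  have poly_p: "poly p (u / v) = (\<Sum>i\<le>N. coeff p i * (u / v) ^ i)"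
    unfolding poly_altdef
    by (rule sum.mono_neutral_left) (use assms in \<open>auto simp: coeff_eq_0\<close>)
  have summand: "v ^ N * (coeff p i * (u / v) ^ i) = coeff p i * u ^ i * v ^ (N - i)"
    if "i \<le> N" for i
  proof -
    have "v ^ N = v ^ i * v ^ (N - i)" using that by (simp flip: power_add)
    thus ?thesis using assms(2) by (simp add: field_simps)
  qed
  show ?thesis unfolding form_eval_def poly_p sum_distrib_left by (rule sum.cong) (auto simp: summand)
qed

lemma form_eval_zero: "form_eval N p u 0 = coeff p N * u ^ N"
proof -
  have "form_eval N p u 0 = (\<Sum>j\<le>N. if j = N then coeff p N * u ^ N else 0)"
    unfolding form_eval_def by (intro sum.cong refl) auto
  thus ?thesis by simp
qed

lemma coeff_mult_at_degree_bounds: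
  assumes "degree p \<le> N" "degree q \<le> M"
  shows "coeff (p * q) (N + M) = coeff p N * coeff q M"
proof (cases "degree p = N \<and> degree q = M")
  case True
  thus ?thesis using coeff_mult_degree_sum[of p q] by simp
next
  case False
  hence "coeff p N = 0 \<or> coeff q M = 0" using assms by (auto simp: coeff_eq_0)
  moreover have "degree (p * q) < N + M" using False assms degree_mult_le[of p q] by linarith
  ultimately show ?thesis by (auto simp: coeff_eq_0)
qed

lemma form_eval_mult:
  assumes "degree p \<le> N" "degree q \<le> M"
  shows "form_eval (N + M) (p * q) u v = form_eval N p u v * form_eval M q u v"
proof (cases "v = 0")
  case True
  thus ?thesis by (simp add: form_eval_zero coeff_mult_at_degree_bounds[OF assms] power_add)
next
  case False
  have "degree (p * q) \<le> N + M" using assms degree_mult_le[of p q] by linarith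
  thus ?thesis using assms False by (simp add: form_eval_eq_poly power_add)
qed

lemma form_eval_linear_poly_power: "form_eval n ([:b, a:] ^ n) u v = (a * u + b * v) ^ n"
proof (induction n)
  case 0
  thus ?case by (simp add: form_eval_def)
next
  case (Suc n)
  have "form_eval (1 + n) ([:b, a:] * [:b, a:] ^ n) u v =
        form_eval 1 [:b, a:] u v * form_eval n ([:b, a:] ^ n) u v"
    by (intro form_eval_mult degree_linear_poly_power_le) (simp add: degree_pCons_le)
  thus ?case using Suc by (simp add: form_eval_def)
qed

lemma poly_fischer_pairing_binomial:
  "poly (\<Sum>m\<le>N. monom (of_nat (N choose m) * fischer_pairing N p (M2 ^ m * M1 ^ (N - m))) m) s =
   fischer_pairing N p ((M1 + smult s M2) ^ N)"
proof -
  have "(M1 + smult s M2) ^ N = (\<Sum>m\<le>N. of_nat (N choose m) * (smult s M2) ^ m * M1 ^ (N - m))"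
    by (subst add.commute) (rule binomial_ring)
  also have "\<dots> = (\<Sum>m\<le>N. smult (of_nat (N choose m) * s ^ m) (M2 ^ m * M1 ^ (N - m)))"
    by (intro sum.cong refl) (simp add: smult_power of_nat_poly mult_ac)
  finally show ?thesis
    by (simp add: fischer_pairing_sum_right fischer_pairing_smult_right poly_sum poly_monom mult_ac)
qed

lemma coeff_mult_linear_poly_powers:
  "coeff ([:a, b:] ^ n * [:c, d:] ^ n) n =
   (\<Sum>k\<le>n. of_nat (n choose k) ^ 2 * a ^ (n - k) * b ^ k * c ^ k * d ^ (n - k))"
  unfolding coeff_mult
proof (intro sum.cong refl)
  fix k assume "k \<in> {..n}"
  hence k: "k \<le> n" by simp
  show "coeff ([:a, b:] ^ n) k * coeff ([:c, d:] ^ n) (n - k) =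
        of_nat (n choose k) ^ 2 * a ^ (n - k) * b ^ k * c ^ k * d ^ (n - k)"
    using k by (simp add: coeff_linear_poly_power binomial_symmetric[OF k, symmetric]
        power2_eq_square mult_ac)
qed

text \<open>Both sides are the coefficient of \<open>s ^ n\<close> in
  \<open>fischer_pairing (2 * n) p ((M1 + smult s M2) ^ (2 * n))\<close>, which the reproducing property
  \<open>fischer_pairing_linear_power\<close> evaluates in closed form.\<close>
lemma fischer_pairing_linear_products:
  fixes a1 b1 a2 b2 c1 d1 c2 d2 :: "'a::field_char_0"
  shows "fischer_pairing (2 * n) ([:b1, a1:] ^ n * [:b2, a2:] ^ n) ([:d2, c2:] ^ n * [:d1, c1:] ^ n) =
    fact n * fact n * (\<Sum>k\<le>n. of_nat (n choose k) ^ 2 * (a1 * c1 + b1 * d1) ^ (n - k) *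
      (a1 * c2 + b1 * d2) ^ k * (a2 * c1 + b2 * d1) ^ k * (a2 * c2 + b2 * d2) ^ (n - k))"
proof -
  let ?p = "[:b1, a1:] ^ n * [:b2, a2:] ^ n"
  let ?M1 = "[:d1, c1:]" and ?M2 = "[:d2, c2:]"
  define G where "G = (\<Sum>m\<le>2 * n.
    monom (of_nat ((2 * n) choose m) * fischer_pairing (2 * n) ?p (?M2 ^ m * ?M1 ^ (2 * n - m))) m)"
  define H where "H = smult (fact (2 * n))
    ([:a1 * c1 + b1 * d1, a1 * c2 + b1 * d2:] ^ n * [:a2 * c1 + b2 * d1, a2 * c2 + b2 * d2:] ^ n)"
  have "poly G s = poly H s" for s
  proof -
    have "poly G s = fischer_pairing (2 * n) ?p ([:d1 + s * d2, c1 + s * c2:] ^ (2 * n))"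
      unfolding G_def poly_fischer_pairing_binomial by simp
    also have "\<dots> = fact (2 * n) * form_eval (n + n) ?p (c1 + s * c2) (d1 + s * d2)"
      by (simp add: fischer_pairing_linear_power mult_2)
    also have "\<dots> = fact (2 * n) * ((a1 * (c1 + s * c2) + b1 * (d1 + s * d2)) ^ n *
        (a2 * (c1 + s * c2) + b2 * (d1 + s * d2)) ^ n)"
      by (simp add: form_eval_mult degree_linear_poly_power_le form_eval_linear_poly_power)
    finally show ?thesis by (simp add: H_def algebra_simps)
  qed
  hence "G = H" using poly_eq_poly_eq_iff by blast
  have "of_nat ((2 * n) choose n) * fischer_pairing (2 * n) ?p (?M2 ^ n * ?M1 ^ n) = coeff G n"
    unfolding G_def coeff_sum coeff_monom by simp
  also have "\<dots> = coeff H n" using \<open>G = H\<close> by simp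
  also have "\<dots> = fact (2 * n) * (\<Sum>k\<le>n. of_nat (n choose k) ^ 2 *
      (a1 * c1 + b1 * d1) ^ (n - k) * (a1 * c2 + b1 * d2) ^ k * (a2 * c1 + b2 * d1) ^ k *
      (a2 * c2 + b2 * d2) ^ (n - k))"
    by (simp only: H_def coeff_smult coeff_mult_linear_poly_powers)
  also have "(fact (2 * n) :: 'a) = of_nat ((2 * n) choose n) * (fact n * fact n)"
  proof -
    have "fact n * fact (2 * n - n) * ((2 * n) choose n) = fact (2 * n)"
      by (rule binomial_fact_lemma) simp
    hence "(fact (2 * n) :: 'a) = of_nat (fact n * fact n * ((2 * n) choose n))"
      by (simp add: mult_2)
    thus ?thesis by (simp add: mult_ac)
  qed
  finally show ?thesis by (simp only: mult.assoc mult_left_cancel of_nat_eq_0_iff) simp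
qed

lemma map_poly_cnj_mult: "map_poly cnj (p * q) = map_poly cnj p * map_poly cnj q"
  by (rule poly_eqI) (simp add: coeff_map_poly coeff_mult)

lemma map_poly_cnj_power: "map_poly cnj (p ^ n) = map_poly cnj p ^ n"
  by (induction n) (simp_all add: map_poly_cnj_mult)

section \<open>Legendre polynomials as sums of squared binomials\<close>

definition binomial_square_poly :: "nat \<Rightarrow> real poly" where
  "binomial_square_poly n = (\<Sum>k\<le>n. monom (real (n choose k) ^ 2) k)"

lemma coeff_binomial_square_poly: "coeff (binomial_square_poly n) k = real (n choose k) ^ 2"
  by (cases "k \<le> n") (auto simp: binomial_square_poly_def coeff_sum binomial_eq_0)

lemma Suc_times_binomial_Suc:
  "real (Suc j) * real (n choose Suc j) = (real n - real j) * real (n choose j)"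
proof (cases "j \<le> n")
  case True
  have "Suc j * (n choose Suc j) = (n - j) * (n choose j)"
    using binomial_absorption binomial_absorb_comp by metis
  thus ?thesis using True by (metis of_nat_diff of_nat_mult)
next
  case False
  thus ?thesis by (simp add: binomial_eq_0)
qed

lemma binomial_triple_identity:
  fixes X Y Z n j :: real
  assumes XY: "(j + 1) * Y = (n - j) * X" and YZ: "(j + 2) * Z = (n - j - 1) * Y" and "j \<ge> 0"
  shows "(n + 2) * (X + 2 * Y + Z) ^ 2 =
    (2 * n + 3) * ((Y + Z) ^ 2 + (X + Y) ^ 2) - (n + 1) * (Z ^ 2 - 2 * Y ^ 2 + X ^ 2)"
proof -
  define A where "A = (j + 1) * Y"
  define B where "B = (j + 1) * (j + 2) * Z"
  have A: "A = (n - j) * X" by (simp add: A_def XY)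
  have B: "B = (n - j - 1) * (n - j) * X"
    by (metis A A_def B_def YZ mult.assoc mult.commute)
  have "(j + 1) * (j + 1) * (j + 2) * (- n * Y ^ 2 + X * Y + Y * Z + (n + 2) * X * Z)
      = - n * (j + 2) * A ^ 2 + (j + 1) * (j + 2) * X * A + A * B + (j + 1) * (n + 2) * X * B"
    unfolding A_def B_def by algebra
  also have "\<dots> = 0" unfolding A B by algebra
  finally have "- n * Y ^ 2 + X * Y + Y * Z + (n + 2) * X * Z = 0"
    using \<open>j \<ge> 0\<close> by (simp add: add_nonneg_eq_0_iff)
  thus ?thesis by algebra
qed

lemma binomial_square_poly_recurrence:
  "smult (real n + 2) (binomial_square_poly (Suc (Suc n))) =
   smult (2 * real n + 3) ([:1, 1:] * binomial_square_poly (Suc n)) -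
   smult (real n + 1) ([:1, -2, 1:] * binomial_square_poly n)"
proof (rule poly_eqI)
  fix k
  consider "k = 0" | "k = 1" | j where "k = Suc (Suc j)"
    by (metis One_nat_def not0_implies_Suc)
  thus "coeff (smult (real n + 2) (binomial_square_poly (Suc (Suc n)))) k =
    coeff (smult (2 * real n + 3) ([:1, 1:] * binomial_square_poly (Suc n)) -
      smult (real n + 1) ([:1, -2, 1:] * binomial_square_poly n)) k"
  proof cases
    case (3 j)
    have "(real n + 2) * (real (n choose j) + 2 * real (n choose Suc j) +
        real (n choose Suc (Suc j))) ^ 2 =
      (2 * real n + 3) * ((real (n choose Suc j) + real (n choose Suc (Suc j))) ^ 2 +
        (real (n choose j) + real (n choose Suc j)) ^ 2) -
      (real n + 1) * (real (n choose Suc (Suc j)) ^ 2 - 2 * real (n choose Suc j) ^ 2 +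
        real (n choose j) ^ 2)"
    proof (rule binomial_triple_identity)
      show "(real j + 1) * real (n choose Suc j) = (real n - real j) * real (n choose j)"
        using Suc_times_binomial_Suc[of j n] by (simp add: add.commute)
      show "(real j + 2) * real (n choose Suc (Suc j)) =
        (real n - real j - 1) * real (n choose Suc j)"
        using Suc_times_binomial_Suc[of "Suc j" n] by (simp add: algebra_simps)
    qed simp
    thus ?thesis using 3 by (simp add: coeff_binomial_square_poly algebra_simps)
  qed (simp_all add: coeff_binomial_square_poly power2_eq_square algebra_simps)
qed

lemma binomial_square_sum_eq_poly:
  fixes u v :: real
  assumes "u \<noteq> 0"
  shows "(\<Sum>k\<le>n. real (n choose k) ^ 2 * u ^ (n - k) * v ^ k) =
    u ^ n * poly (binomial_square_poly n) (v / u)"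
proof -
  have summand: "u ^ n * (v / u) ^ k = u ^ (n - k) * v ^ k" if "k \<le> n" for k
  proof -
    have "u ^ n = u ^ (n - k) * u ^ k" using that by (simp flip: power_add)
    thus ?thesis using assms by (simp add: power_divide)
  qed
  have "u ^ n * poly (binomial_square_poly n) (v / u) =
    (\<Sum>k\<le>n. real (n choose k) ^ 2 * (u ^ n * (v / u) ^ k))"
    by (simp add: binomial_square_poly_def poly_sum poly_monom sum_distrib_left mult_ac)
  also have "\<dots> = (\<Sum>k\<le>n. real (n choose k) ^ 2 * u ^ (n - k) * v ^ k)"
    by (intro sum.cong refl) (simp add: summand mult.assoc)
  finally show ?thesis ..
qed

lemma legendreP_minus_one: "legendreP n (- 1) = (- 1) ^ n"
proof -
  have "legendreP n (- 1) = (- 1) ^ n \<and> legendreP (Suc n) (- 1) = (- 1) ^ Suc n"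
    by (induction n) (auto simp: field_simps)
  thus ?thesis ..
qed

lemma legendreP_one: "legendreP n 1 = 1"
proof -
  have "legendreP n 1 = 1 \<and> legendreP (Suc n) 1 = 1"
    by (induction n) (auto simp: field_simps)
  thus ?thesis ..
qed

text \<open>In the variable \<open>r = (t - 1) / (t + 1)\<close> the sum becomes
  \<open>((1 + t) / 2) ^ n * poly (binomial_square_poly n) r\<close>, and Bonnet's recurrence turns into
  \<open>binomial_square_poly_recurrence\<close>.\<close>
lemma legendreP_eq_binomial_sum:
  "legendreP n t = (\<Sum>k\<le>n. real (n choose k) ^ 2 * ((1 + t) / 2) ^ (n - k) * ((t - 1) / 2) ^ k)"
proof (cases "t = -1")
  case True
  have "(\<Sum>k\<le>n. real (n choose k) ^ 2 * 0 ^ (n - k) * (- 1) ^ k) =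
    (\<Sum>k\<le>n. if k = n then (- 1) ^ n else 0)"
    by (intro sum.cong refl) auto
  thus ?thesis using True by (simp add: legendreP_minus_one)
next
  case False
  define u where "u = (1 + t) / 2"
  define r where "r = ((t - 1) / 2) / u"
  have "u \<noteq> 0" using False by (simp add: u_def)
  have ur1: "u * (1 + r) = t" and ur2: "u * (1 - r) = 1"
    using \<open>u \<noteq> 0\<close> by (simp_all add: r_def u_def field_simps)
  define Q where "Q n = u ^ n * poly (binomial_square_poly n) r" for n
  have sum_eq_Q: "(\<Sum>k\<le>n. real (n choose k) ^ 2 * u ^ (n - k) * ((t - 1) / 2) ^ k) = Q n" for n
    unfolding Q_def r_def by (rule binomial_square_sum_eq_poly[OF \<open>u \<noteq> 0\<close>])
  have "legendreP n t = Q n \<and> legendreP (Suc n) t = Q (Suc n)"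
  proof (induction n)
    case 0
    thus ?case using ur1 by (simp add: Q_def binomial_square_poly_def poly_monom algebra_simps)
  next
    case (Suc n)
    have "(real n + 2) * poly (binomial_square_poly (Suc (Suc n))) r =
      (2 * real n + 3) * ((1 + r) * poly (binomial_square_poly (Suc n)) r) -
      (real n + 1) * ((1 - r) ^ 2 * poly (binomial_square_poly n) r)"
      using arg_cong[OF binomial_square_poly_recurrence, of "\<lambda>p. poly p r"]
      by (simp add: power2_eq_square algebra_simps)
    hence "(real n + 2) * Q (Suc (Suc n)) = u ^ Suc (Suc n) *
      ((2 * real n + 3) * ((1 + r) * poly (binomial_square_poly (Suc n)) r) -
       (real n + 1) * ((1 - r) ^ 2 * poly (binomial_square_poly n) r))"
      unfolding Q_def by (metis mult.left_commute)
    also have "\<dots> =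
      (2 * real n + 3) * (u * (1 + r)) * Q (Suc n) - (real n + 1) * (u * (1 - r)) ^ 2 * Q n"
      unfolding Q_def by (simp add: power2_eq_square algebra_simps)
    finally have "(real n + 2) * Q (Suc (Suc n)) =
      (2 * real n + 3) * (u * (1 + r)) * Q (Suc n) - (real n + 1) * (u * (1 - r)) ^ 2 * Q n" .
    hence "Q (Suc (Suc n)) = ((2 * real n + 3) * t * Q (Suc n) - (real n + 1) * Q n) / (real n + 2)"
      unfolding ur1 ur2 by (simp add: field_simps)
    thus ?case using Suc by simp
  qed
  thus ?thesis using sum_eq_Q[of n] by (simp add: u_def)
qed

section \<open>Positive semidefinite kernels\<close>

definition psd_kernel :: "'a set \<Rightarrow> ('a \<Rightarrow> 'a \<Rightarrow> real) \<Rightarrow> bool" where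
  "psd_kernel S K \<longleftrightarrow> (\<forall>(I :: nat set) (c :: nat \<Rightarrow> real) x. finite I \<longrightarrow> x ` I \<subseteq> S \<longrightarrow>
     0 \<le> (\<Sum>i\<in>I. \<Sum>j\<in>I. c i * c j * K (x i) (x j)))"

lemma psd_kernelI:
  assumes "\<And>(I :: nat set) c x. finite I \<Longrightarrow> x ` I \<subseteq> S \<Longrightarrow>
    0 \<le> (\<Sum>i\<in>I. \<Sum>j\<in>I. c i * c j * K (x i) (x j))"
  shows "psd_kernel S K"
  unfolding psd_kernel_def using assms by simp

lemma psd_kernelD:
  fixes I :: "nat set"
  assumes "psd_kernel S K" "finite I" "x ` I \<subseteq> S"
  shows "0 \<le> (\<Sum>i\<in>I. \<Sum>j\<in>I. c i * c j * K (x i) (x j))"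
  using assms(1)[unfolded psd_kernel_def, rule_format, OF assms(2,3)] .

lemma psd_kernel_gram:
  fixes f :: "'l \<Rightarrow> 'a \<Rightarrow> complex"
  assumes "finite L" and w: "\<And>l. l \<in> L \<Longrightarrow> 0 \<le> w l"
    and K: "\<And>x y. x \<in> S \<Longrightarrow> y \<in> S \<Longrightarrow>
      complex_of_real (K x y) = (\<Sum>l\<in>L. of_real (w l) * f l x * cnj (f l y))"
  shows "psd_kernel S K"
proof (rule psd_kernelI)
  fix I :: "nat set" and c x
  assume "finite I" "x ` I \<subseteq> S"
  hence x: "\<And>i. i \<in> I \<Longrightarrow> x i \<in> S" by blast
  define z where "z l = (\<Sum>i\<in>I. of_real (c i) * f l (x i))" for l
  have "complex_of_real (\<Sum>i\<in>I. \<Sum>j\<in>I. c i * c j * K (x i) (x j)) =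
    (\<Sum>i\<in>I. \<Sum>j\<in>I. \<Sum>l\<in>L.
      of_real (w l) * ((of_real (c i) * f l (x i)) * cnj (of_real (c j) * f l (x j))))"
    by (simp add: K x sum_distrib_left mult_ac)
  also have "\<dots> = (\<Sum>l\<in>L. \<Sum>i\<in>I. \<Sum>j\<in>I.
      of_real (w l) * ((of_real (c i) * f l (x i)) * cnj (of_real (c j) * f l (x j))))"
    by (simp only: sum.swap[where A = I and B = L])
  also have "\<dots> = (\<Sum>l\<in>L. of_real (w l) * (z l * cnj (z l)))"
  proof -
    have "z l * cnj (z l) =
      (\<Sum>i\<in>I. \<Sum>j\<in>I. (of_real (c i) * f l (x i)) * cnj (of_real (c j) * f l (x j)))" for l
      unfolding z_def cnj_sum by (rule sum_product)
    thus ?thesis by (simp only: sum_distrib_left)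
  qed
  also have "\<dots> = complex_of_real (\<Sum>l\<in>L. w l * (cmod (z l))\<^sup>2)"
    by (simp only: of_real_sum of_real_mult complex_norm_square)
  finally have "(\<Sum>i\<in>I. \<Sum>j\<in>I. c i * c j * K (x i) (x j)) = (\<Sum>l\<in>L. w l * (cmod (z l))\<^sup>2)"
    by (simp only: of_real_eq_iff)
  also have "\<dots> \<ge> 0" by (intro sum_nonneg mult_nonneg_nonneg w) simp_all
  finally show "0 \<le> (\<Sum>i\<in>I. \<Sum>j\<in>I. c i * c j * K (x i) (x j))" .
qed

lemma psd_kernel_rescale:
  assumes "psd_kernel S K"
  shows "psd_kernel S (\<lambda>x y. g x * g y * K x y)"
proof (rule psd_kernelI)
  fix I :: "nat set" and c x
  assume "finite I" "x ` I \<subseteq> S"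
  from psd_kernelD[OF assms this, of "\<lambda>i. c i * g (x i)"]
  show "0 \<le> (\<Sum>i\<in>I. \<Sum>j\<in>I. c i * c j * (g (x i) * g (x j) * K (x i) (x j)))"
    by (simp add: mult_ac)
qed

lemma psd_kernel_suminf:
  assumes psd: "\<And>n. psd_kernel S (K n)"
    and summable: "\<And>x y. x \<in> S \<Longrightarrow> y \<in> S \<Longrightarrow> summable (\<lambda>n. K n x y)"
  shows "psd_kernel S (\<lambda>x y. \<Sum>n. K n x y)"
proof (rule psd_kernelI)
  fix I :: "nat set" and c x
  assume I: "finite I" "x ` I \<subseteq> S"
  hence summable_I: "summable (\<lambda>n. c i * c j * K n (x i) (x j))" if "i \<in> I" "j \<in> I" for i j
    using that by (intro summable_mult summable) auto
  have "(\<Sum>i\<in>I. \<Sum>j\<in>I. c i * c j * (\<Sum>n. K n (x i) (x j))) =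
    (\<Sum>i\<in>I. \<Sum>j\<in>I. \<Sum>n. c i * c j * K n (x i) (x j))"
    using I by (intro sum.cong refl suminf_mult[symmetric] summable) auto
  also have "\<dots> = (\<Sum>i\<in>I. \<Sum>n. \<Sum>j\<in>I. c i * c j * K n (x i) (x j))"
    by (intro sum.cong refl suminf_sum[symmetric] summable_I) auto
  also have "\<dots> = (\<Sum>n. \<Sum>i\<in>I. \<Sum>j\<in>I. c i * c j * K n (x i) (x j))"
    by (intro suminf_sum[symmetric] summable_sum summable_I) auto
  also have "\<dots> \<ge> 0"
    using summable_I psd_kernelD[OF psd I] by (intro suminf_nonneg summable_sum) auto
  finally show "0 \<le> (\<Sum>i\<in>I. \<Sum>j\<in>I. c i * c j * (\<Sum>n. K n (x i) (x j)))" .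
qed

lemma psd_kernel_abs_le:
  assumes "psd_kernel S K" "x \<in> S" "y \<in> S" "K x y = K y x"
  shows "2 * \<bar>K x y\<bar> \<le> K x x + K y y"
proof -
  have two_points: "(\<lambda>i::nat. if i = 0 then x else y) ` {0, 1} \<subseteq> S" using assms by auto
  have "0 \<le> K x x + 2 * K x y + K y y" "0 \<le> K x x - 2 * K x y + K y y"
    using psd_kernelD[OF assms(1) _ two_points, of "\<lambda>_. 1"]
      psd_kernelD[OF assms(1) _ two_points, of "\<lambda>i. if i = 0 then 1 else - 1"] assms(4)
    by simp_all
  thus ?thesis by linarith
qed

section \<open>Spinors\<close>

text \<open>\<open>spinor x a b\<close>: the unit vector \<open>(a, b) \<in> \<complex>\<^sup>2\<close> is mapped to \<open>x\<close> by the Hopf map.\<close>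
definition spinor :: "real^3 \<Rightarrow> complex \<Rightarrow> complex \<Rightarrow> bool" where
  "spinor x a b \<longleftrightarrow> a * cnj a + b * cnj b = 1 \<and>
     complex_of_real (x$1) = cnj a * b + a * cnj b \<and>
     \<i> * complex_of_real (x$2) = cnj a * b - a * cnj b \<and>
     complex_of_real (x$3) = a * cnj a - b * cnj b"

lemma inner_vec3: "(x::real^3) \<bullet> y = x$1 * y$1 + x$2 * y$2 + x$3 * y$3"
  by (simp add: inner_vec_def sum_3)

lemma spinor_exists:
  assumes "x \<in> sphere2"
  shows "\<exists>a b. spinor x a b"
proof -
  have norm: "(x$1)\<^sup>2 + (x$2)\<^sup>2 + (x$3)\<^sup>2 = 1"
    using assms by (simp add: sphere2_def inner_vec3 power2_eq_square)
  show ?thesis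
  proof (cases "x$3 = -1")
    case True
    hence "x$1 = 0" "x$2 = 0" using norm by simp_all
    hence "spinor x 0 1" using True by (simp add: spinor_def)
    thus ?thesis by blast
  next
    case False
    have "(x$3)\<^sup>2 \<le> 1" using norm zero_le_power2[of "x$1"] zero_le_power2[of "x$2"] by linarith
    hence pos: "1 + x$3 > 0" using False abs_le_square_iff[of "x$3" 1] by auto
    define s where "s = sqrt ((1 + x$3) / 2)"
    have s: "s > 0" "s\<^sup>2 = (1 + x$3) / 2" using pos by (simp_all add: s_def)
    define a where "a = complex_of_real s"
    define b where "b = Complex (x$1 / (2 * s)) (x$2 / (2 * s))"
    have "a * cnj a = complex_of_real (s\<^sup>2)" by (simp add: a_def power2_eq_square)
    hence aa: "a * cnj a = complex_of_real ((1 + x$3) / 2)" by (simp only: s(2))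
    have bb: "b * cnj b = complex_of_real ((1 - x$3) / 2)"
    proof -
      have "(x$1 / (2 * s))\<^sup>2 + (x$2 / (2 * s))\<^sup>2 = ((x$1)\<^sup>2 + (x$2)\<^sup>2) / (4 * s\<^sup>2)"
        by (simp add: power_divide power_mult_distrib add_divide_distrib)
      also have "\<dots> = (1 - (x$3)\<^sup>2) / (2 * (1 + x$3))"
      proof -
        have "(x$1)\<^sup>2 + (x$2)\<^sup>2 = 1 - (x$3)\<^sup>2" "4 * s\<^sup>2 = 2 * (1 + x$3)"
          using norm s(2) by simp_all
        thus ?thesis by simp
      qed
      also have "\<dots> = (1 - x$3) / 2"
        using pos s(2) by (simp add: field_simps power2_eq_square)
      finally have "(Re b)\<^sup>2 + (Im b)\<^sup>2 = (1 - x$3) / 2" by (simp add: b_def)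
      thus ?thesis by (simp only: complex_mult_cnj)
    qed
    have "spinor x a b"
      unfolding spinor_def aa bb using s(1)
      by (simp add: a_def b_def complex_eq_iff field_simps flip: of_real_add of_real_diff)
    thus ?thesis by blast
  qed
qed

lemma spinorD:
  assumes "spinor x a b"
  shows "a * cnj a + b * cnj b = 1"
    and "complex_of_real (x$1) = cnj a * b + a * cnj b"
    and "\<i> * complex_of_real (x$2) = cnj a * b - a * cnj b"
    and "complex_of_real (x$3) = a * cnj a - b * cnj b"
  using assms by (simp_all add: spinor_def)

lemma spinor_inner:
  assumes "spinor x a b" "spinor y c d"
  shows "(a * cnj c + b * cnj d) * (cnj a * c + cnj b * d) = complex_of_real ((1 + x \<bullet> y) / 2)"
    and "- ((b * c - a * d) * (cnj b * cnj c - cnj a * cnj d)) = complex_of_real ((x \<bullet> y - 1) / 2)"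
proof -
  note X = spinorD[OF assms(1)] and Y = spinorD[OF assms(2)]
  define e where "e = (cnj a * b + a * cnj b) * (cnj c * d + c * cnj d) -
    (cnj a * b - a * cnj b) * (cnj c * d - c * cnj d) + (a * cnj a - b * cnj b) * (c * cnj c - d * cnj d)"
  have "complex_of_real (x \<bullet> y) = complex_of_real (x$1) * complex_of_real (y$1) -
    (\<i> * complex_of_real (x$2)) * (\<i> * complex_of_real (y$2)) +
    complex_of_real (x$3) * complex_of_real (y$3)"
    by (simp add: inner_vec3 algebra_simps)
  hence inner: "complex_of_real (x \<bullet> y) = e" unfolding e_def X(2-4) Y(2-4) .
  have "2 * ((a * cnj c + b * cnj d) * (cnj a * c + cnj b * d)) =
    (a * cnj a + b * cnj b) * (c * cnj c + d * cnj d) + e"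
    unfolding e_def by algebra
  thus "(a * cnj c + b * cnj d) * (cnj a * c + cnj b * d) = complex_of_real ((1 + x \<bullet> y) / 2)"
    unfolding X(1) Y(1) inner[symmetric] by (simp add: field_simps)
  have "2 * (- ((b * c - a * d) * (cnj b * cnj c - cnj a * cnj d))) =
    e - (a * cnj a + b * cnj b) * (c * cnj c + d * cnj d)"
    unfolding e_def by algebra
  thus "- ((b * c - a * d) * (cnj b * cnj c - cnj a * cnj d)) = complex_of_real ((x \<bullet> y - 1) / 2)"
    unfolding X(1) Y(1) inner[symmetric] by (simp add: field_simps)
qed

section \<open>The Legendre kernel on the sphere\<close>

definition spinor_form :: "nat \<Rightarrow> complex \<Rightarrow> complex \<Rightarrow> complex poly" where
  "spinor_form n a b = [:b, a:] ^ n * [:cnj a, - cnj b:] ^ n"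

lemma map_poly_cnj_spinor_form:
  "map_poly cnj (spinor_form n c d) = [:c, - d:] ^ n * [:cnj d, cnj c:] ^ n"
  by (simp add: spinor_form_def map_poly_cnj_mult map_poly_cnj_power map_poly_pCons mult.commute)

lemma fischer_pairing_spinor_forms:
  assumes "spinor x a b" "spinor y c d"
  shows "fischer_pairing (2 * n) (spinor_form n a b) (map_poly cnj (spinor_form n c d)) =
    complex_of_real (fact n * fact n * legendreP n (x \<bullet> y))"
proof -
  have "fischer_pairing (2 * n) (spinor_form n a b) (map_poly cnj (spinor_form n c d)) =
    fact n * fact n * (\<Sum>k\<le>n. of_nat (n choose k) ^ 2 *
      (a * cnj c + b * cnj d) ^ (n - k) * (a * - d + b * c) ^ k *
      (- cnj b * cnj c + cnj a * cnj d) ^ k * (- cnj b * - d + cnj a * c) ^ (n - k))"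
    unfolding map_poly_cnj_spinor_form
    by (unfold spinor_form_def) (rule fischer_pairing_linear_products)
  also have "\<dots> = fact n * fact n * (\<Sum>k\<le>n. of_nat (n choose k) ^ 2 *
      ((a * cnj c + b * cnj d) * (cnj a * c + cnj b * d)) ^ (n - k) *
      (- ((b * c - a * d) * (cnj b * cnj c - cnj a * cnj d))) ^ k)"
  proof -
    have cross: "- ((b * c - a * d) * (cnj b * cnj c - cnj a * cnj d)) =
      (a * - d + b * c) * (- cnj b * cnj c + cnj a * cnj d)"
      by algebra
    have diagonal: "cnj a * c + cnj b * d = - cnj b * - d + cnj a * c" by simp
    show ?thesis unfolding cross diagonal power_mult_distrib by (simp add: mult_ac)
  qed
  also have "\<dots> = complex_of_real (fact n * fact n * legendreP n (x \<bullet> y))"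
    unfolding spinor_inner[OF assms] legendreP_eq_binomial_sum by simp
  finally show ?thesis .
qed

lemma psd_kernel_legendreP: "psd_kernel sphere2 (\<lambda>x y. legendreP n (x \<bullet> y))"
proof -
  have "\<forall>x\<in>sphere2. \<exists>p. spinor x (fst p) (snd p)" using spinor_exists by simp
  then obtain spin where spin: "\<And>x. x \<in> sphere2 \<Longrightarrow> spinor x (fst (spin x)) (snd (spin x))"
    by metis
  define q where "q x = spinor_form n (fst (spin x)) (snd (spin x))" for x
  define w where "w l = fact l * fact (2 * n - l) / (fact n * fact n :: real)" for l
  show ?thesis
  proof (rule psd_kernel_gram[of "{..2 * n}" w])
    fix x y assume "x \<in> sphere2" "y \<in> sphere2"
    hence "complex_of_real (fact n * fact n * legendreP n (x \<bullet> y)) =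
      fischer_pairing (2 * n) (q x) (map_poly cnj (q y))"
      unfolding q_def by (intro fischer_pairing_spinor_forms[symmetric] spin)
    also have "\<dots> =
      (\<Sum>l\<le>2 * n. of_nat (fact l * fact (2 * n - l)) * coeff (q x) l * cnj (coeff (q y) l))"
      by (simp add: fischer_pairing_def coeff_map_poly)
    finally have "complex_of_real (legendreP n (x \<bullet> y)) =
      (\<Sum>l\<le>2 * n. of_nat (fact l * fact (2 * n - l)) * coeff (q x) l * cnj (coeff (q y) l)) /
      (fact n * fact n)"
      by (simp add: eq_divide_eq mult.commute)
    thus "complex_of_real (legendreP n (x \<bullet> y)) =
      (\<Sum>l\<le>2 * n. of_real (w l) * coeff (q x) l * cnj (coeff (q y) l))"
      by (simp add: w_def sum_divide_distrib)
  qed (simp_all add: w_def)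
qed

lemma abs_legendreP_inner_le_1:
  assumes "x \<in> sphere2" "y \<in> sphere2"
  shows "\<bar>legendreP n (x \<bullet> y)\<bar> \<le> 1"
  using psd_kernel_abs_le[OF psd_kernel_legendreP assms] assms
  by (simp add: sphere2_def inner_commute legendreP_one)

lemma summable_sqrt_mult_legendreP:
  assumes "x \<in> sphere2" "y \<in> sphere2"
    and nonneg: "\<And>n. b n x \<ge> 0" "\<And>n. b n y \<ge> 0"
    and summable: "summable (\<lambda>n. b n x)" "summable (\<lambda>n. b n y)"
  shows "summable (\<lambda>n. sqrt (b n x * b n y) * legendreP n (x \<bullet> y))"
proof (rule summable_comparison_test')
  show "summable (\<lambda>n. (b n x + b n y) / 2)"
    using summable by (intro summable_divide summable_add)
  fix n
  have "norm (sqrt (b n x * b n y) * legendreP n (x \<bullet> y)) \<le> sqrt (b n x * b n y)"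
    using abs_legendreP_inner_le_1[OF assms(1,2)] nonneg[of n]
    by (simp add: abs_mult mult_left_le)
  also have "\<dots> \<le> (b n x + b n y) / 2"
    using arith_geo_mean_sqrt[OF nonneg(1,2)] by simp
  finally show "norm (sqrt (b n x * b n y) * legendreP n (x \<bullet> y)) \<le> (b n x + b n y) / 2" .
qed

theorem mainTheorem1:
  fixes b :: "nat \<Rightarrow> real^3 \<Rightarrow> real"
    and k :: nat and x :: "nat \<Rightarrow> real^3" and a :: "nat \<Rightarrow> real"
  assumes nonneg: "\<And>n y. y \<in> sphere2 \<Longrightarrow> b n y \<ge> 0"
    and summ: "\<And>y. y \<in> sphere2 \<Longrightarrow> summable (\<lambda>n. b n y)"
    and pts: "\<And>i. i \<in> {1..k} \<Longrightarrow> x i \<in> sphere2"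
  shows "(\<Sum>i=1..k. \<Sum>j=1..k. a i * a j * covC b (x i) (x j)) \<ge> 0"
proof -
  have "psd_kernel sphere2 (covC b)"
    unfolding covC_def
  proof (rule psd_kernel_suminf)
    show "psd_kernel sphere2 (\<lambda>y z. sqrt (b n y * b n z) * legendreP n (y \<bullet> z))" for n
      using psd_kernel_rescale[OF psd_kernel_legendreP, of "\<lambda>y. sqrt (b n y)"]
      by (simp add: real_sqrt_mult)
  qed (intro summable_sqrt_mult_legendreP nonneg summ; assumption)+
  thus ?thesis using pts by (intro psd_kernelD) auto
qed

end
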